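(* There exist infinitely many pairs $(n_1,n_2)$ of positive integers for each of which there are NFAs $A$ and $B$ over a binary alphabet, with $n_1$ and $n_2$ states respectively, such that there is no infinite tower of prefixes between $L(A)$ and $L(B)$ and there is a tower of prefixes between $L(A)$ and $L(B)$ whose height is superpolynomial in $n_1+n_2$ (that is, along this family the height is not bounded by any polynomial in $n_1+n_2$).
   Context: A string $v$ is a prefix of $w$, written $v\le w$, if $w=vu$ for some string $u$. A sequence $(w_i)_{i=1}^r$ of strings is a tower of prefixes between languages $K$ and $L$ if $w_1\in K\cup L$ and for all $i=1,\dots,r-1$: $w_i\le w_{i+1}$, $w_i\in K$ implies $w_{i+1}\in L$, and $w_i\in L$ implies $w_{i+1}\in K$; $r$ is its height. An infinite tower of prefixes is an infinite sequence with the same properties. *)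

theory Defs
  imports Main "HOL-Library.Sublist"
begin

record nfa =
  states :: "nat set"
  init   :: "nat set"
  fin    :: "nat set"
  trans  :: "(nat \<times> bool \<times> nat) set"

definition wf_nfa :: "nfa \<Rightarrow> bool" where
  "wf_nfa A \<longleftrightarrow> finite (states A) \<and> init A \<subseteq> states A \<and> fin A \<subseteq> states A
     \<and> trans A \<subseteq> states A \<times> UNIV \<times> states A"

fun delta_star :: "nfa \<Rightarrow> nat set \<Rightarrow> bool list \<Rightarrow> nat set" where
  "delta_star A S [] = S"
| "delta_star A S (a # w) = delta_star A {q'. \<exists>q\<in>S. (q, a, q') \<in> trans A} w"

definition lang :: "nfa \<Rightarrow> bool list set" where
  "lang A = {w. delta_star A (init A) w \<inter> fin A \<noteq> {}}"

text \<open>A (finite) tower of prefixes between K and L, given as the list w_1..w_r; its height is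
  the length of the list.\<close>

definition tower :: "'a list set \<Rightarrow> 'a list set \<Rightarrow> 'a list list \<Rightarrow> bool" where
  "tower K L ws \<longleftrightarrow> ws \<noteq> [] \<and> hd ws \<in> K \<union> L \<and>
     (\<forall>i. Suc i < length ws \<longrightarrow>
        prefix (ws ! i) (ws ! Suc i) \<and>
        (ws ! i \<in> K \<longrightarrow> ws ! Suc i \<in> L) \<and>
        (ws ! i \<in> L \<longrightarrow> ws ! Suc i \<in> K))"

definition infinite_tower :: "'a list set \<Rightarrow> 'a list set \<Rightarrow> (nat \<Rightarrow> 'a list) \<Rightarrow> bool" where
  "infinite_tower K L w \<longleftrightarrow> w 0 \<in> K \<union> L \<and>
     (\<forall>i. prefix (w i) (w (Suc i)) \<and>
        (w i \<in> K \<longrightarrow> w (Suc i) \<in> L) \<and>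
        (w i \<in> L \<longrightarrow> w (Suc i) \<in> K))"

end

theory Submission
  imports Defs "HOL-Real_Asymp.Real_Asymp"
begin

text \<open>Code a word over the naturals in unary, the letter \<open>x\<close> as \<open>1\<^sup>x 0\<close>. Let \<open>W\<^sub>0 = {\<epsilon>}\<close>
  and let \<open>W\<^sub>n\<^sub>+\<^sub>1\<close> (\<open>ruler_words\<close>) consist of \<open>W\<^sub>n\<close> and the words \<open>u n v\<close> with \<open>u\<close> over the
  letters below \<open>n\<close> and \<open>v \<in> W\<^sub>n\<close>. No \<open>W\<^sub>n\<close> contains an infinite strictly increasing
  prefix chain: once a word of the chain contains the letter \<open>n - 1\<close>, the part up to its
  first occurrence is frozen and the rest of the chain is a chain in \<open>W\<^sub>n\<^sub>-\<^sub>1\<close>. The prefixes of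
  the ruler word \<open>0 1 0 2 0 1 0 \<dots>\<close> of length below \<open>2\<^sup>n\<close> lie in \<open>W\<^sub>n\<close>, and such a
  prefix ends with the letter \<open>0\<close> exactly when its length is odd.

  NFAs with \<open>2 + n\<^sup>2\<close> states recognise the codes of the words of \<open>W\<^sub>n\<close> that do not,
  respectively do, end with \<open>0\<close>. These two languages are disjoint, so a tower between them is a
  strictly increasing prefix chain in (the code of) \<open>W\<^sub>n\<close> and cannot be infinite, whereas the
  \<open>2\<^sup>n\<close> prefixes of the ruler word form a tower of height \<open>2\<^sup>n\<close>.\<close>

definition acc :: "nfa \<Rightarrow> nat \<Rightarrow> bool list \<Rightarrow> bool" where
  "acc A q w \<longleftrightarrow> delta_star A {q} w \<inter> fin A \<noteq> {}"

lemma delta_star_eq_UN: "delta_star A S w = (\<Union>q\<in>S. delta_star A {q} w)"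
proof (induction w arbitrary: S)
  case (Cons a w)
  have "delta_star A S (a # w) = (\<Union>q\<in>S. \<Union>p\<in>{p. (q, a, p) \<in> trans A}. delta_star A {p} w)"
    by (subst delta_star.simps, subst Cons.IH) blast
  also have "\<dots> = (\<Union>q\<in>S. delta_star A {q} (a # w))"
    by (simp only: delta_star.simps Cons.IH[symmetric]) simp
  finally show ?case .
qed simp

lemma lang_iff_acc: "w \<in> lang A \<longleftrightarrow> (\<exists>q\<in>init A. acc A q w)"
  unfolding lang_def acc_def by (subst delta_star_eq_UN) auto

lemma acc_Nil [simp]: "acc A q [] \<longleftrightarrow> q \<in> fin A"
  by (auto simp: acc_def)

lemma acc_Cons: "acc A q (a # w) \<longleftrightarrow> (\<exists>p. (q, a, p) \<in> trans A \<and> acc A p w)"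
  unfolding acc_def by (subst delta_star.simps, subst delta_star_eq_UN) auto

definition no_infinite_prefix_chain :: "'a list set \<Rightarrow> bool" where
  "no_infinite_prefix_chain S \<longleftrightarrow>
     \<not> (\<exists>v. \<forall>i. v i \<in> S \<and> strict_prefix (v i) (v (Suc i)))"

lemma no_infinite_prefix_chainI:
  assumes "\<And>v. \<forall>i. v i \<in> S \<Longrightarrow> \<forall>i. strict_prefix (v i) (v (Suc i)) \<Longrightarrow> False"
  shows "no_infinite_prefix_chain S"
  using assms unfolding no_infinite_prefix_chain_def by auto

lemma no_infinite_prefix_chainD:
  assumes "no_infinite_prefix_chain S" and "\<And>i. v i \<in> S"
    and "\<And>i. strict_prefix (v i) (v (Suc i))"
  shows False
  using assms unfolding no_infinite_prefix_chain_def by auto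

lemma no_infinite_prefix_chain_subset:
  "no_infinite_prefix_chain T \<Longrightarrow> S \<subseteq> T \<Longrightarrow> no_infinite_prefix_chain S"
  unfolding no_infinite_prefix_chain_def by blast

lemma no_infinite_prefix_chain_image:
  assumes reflect: "\<And>u v. prefix (f u) (f v) \<Longrightarrow> prefix u v"
    and S: "no_infinite_prefix_chain S"
  shows "no_infinite_prefix_chain (f ` S)"
proof (rule no_infinite_prefix_chainI)
  fix w assume "\<forall>i. w i \<in> f ` S" and w: "\<forall>i. strict_prefix (w i) (w (Suc i))"
  then have "\<forall>i. \<exists>x. x \<in> S \<and> w i = f x" by blast
  then obtain v where v: "\<And>i. v i \<in> S" "\<And>i. w i = f (v i)" by metis
  have "strict_prefix (v i) (v (Suc i))" for i
    using w[rule_format, of i] reflect[of "v i" "v (Suc i)"] v(2) by (auto simp: strict_prefix_def)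
  with S v(1) show False by (rule no_infinite_prefix_chainD)
qed

lemma no_infinite_tower_if_disjoint:
  assumes disj: "K \<inter> L = {}" and chains: "no_infinite_prefix_chain (K \<union> L)"
  shows "\<not> (\<exists>w. infinite_tower K L w)"
proof
  assume "\<exists>w. infinite_tower K L w"
  then obtain w where w0: "w 0 \<in> K \<union> L"
    and step: "\<And>i. prefix (w i) (w (Suc i)) \<and> (w i \<in> K \<longrightarrow> w (Suc i) \<in> L)
                 \<and> (w i \<in> L \<longrightarrow> w (Suc i) \<in> K)"
    unfolding infinite_tower_def by blast
  have mem: "w i \<in> K \<union> L" for i
    by (induction i) (use w0 step in blast)+
  have "strict_prefix (w i) (w (Suc i))" for i
    using mem[of i] step[of i] disj by (auto simp: strict_prefix_def)
  with chains mem show False by (rule no_infinite_prefix_chainD)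
qed

lemma tower_if_alternating:
  assumes ne: "ws \<noteq> []" and disj: "K \<inter> L = {}"
    and mem: "\<And>i. i < length ws \<Longrightarrow> ws ! i \<in> (if even i then K else L)"
    and chain: "\<And>i. Suc i < length ws \<Longrightarrow> prefix (ws ! i) (ws ! Suc i)"
  shows "tower K L ws"
  unfolding tower_def
proof (intro conjI allI impI)
  show "hd ws \<in> K \<union> L" using mem[of 0] ne by (simp add: hd_conv_nth)
next
  fix i assume i: "Suc i < length ws"
  then show "prefix (ws ! i) (ws ! Suc i)" by (rule chain)
  have "ws ! i \<in> (if even i then K else L)" "ws ! Suc i \<in> (if even i then L else K)"
    using mem[of i] mem[of "Suc i"] i by auto
  with disj show "ws ! i \<in> K \<Longrightarrow> ws ! Suc i \<in> L" "ws ! i \<in> L \<Longrightarrow> ws ! Suc i \<in> K"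
    by (auto split: if_splits)
qed (rule ne)

definition unary :: "nat list \<Rightarrow> bool list" where
  "unary xs = concat (map (\<lambda>x. replicate x True @ [False]) xs)"

lemma unary_simps [simp]:
  "unary [] = []"
  "unary (x # xs) = replicate x True @ False # unary xs"
  "unary (xs @ ys) = unary xs @ unary ys"
  by (simp_all add: unary_def)

lemma prefix_replicate_True_False_iff:
  "prefix (replicate x True @ False # u) (replicate y True @ False # v) \<longleftrightarrow> x = y \<and> prefix u v"
proof (induction x arbitrary: y)
  case 0
  then show ?case by (cases y) auto
next
  case (Suc x)
  then show ?case by (cases y) auto
qed

lemma prefix_unary_iff [simp]: "prefix (unary u) (unary v) \<longleftrightarrow> prefix u v"
proof
  show "prefix (unary u) (unary v) \<Longrightarrow> prefix u v"
  proof (induction u arbitrary: v)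
    case (Cons x u)
    then obtain y v' where "v = y # v'" by (cases v) auto
    with Cons show ?case by (simp add: prefix_replicate_True_False_iff)
  qed simp
  show "prefix u v \<Longrightarrow> prefix (unary u) (unary v)"
    by (elim prefixE) simp
qed

lemma inj_unary: "inj unary"
  by (rule injI) (metis prefix_order.antisym prefix_order.refl prefix_unary_iff)

lemma replicate_True_in_unary_image:
  "replicate d True \<in> unary ` S \<longleftrightarrow> d = 0 \<and> [] \<in> S"
proof
  assume "replicate d True \<in> unary ` S"
  then obtain u where "u \<in> S" "replicate d True = unary u" by blast
  moreover have "u = []"
    using \<open>replicate d True = unary u\<close>
    by (cases u) (auto dest: arg_cong[where f = "\<lambda>l. False \<in> set l"])
  ultimately show "d = 0 \<and> [] \<in> S" by simp
qed force

lemma replicate_True_False_in_unary_image: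
  "replicate d True @ False # w \<in> unary ` S \<longleftrightarrow> w \<in> unary ` {u. d # u \<in> S}"
proof
  assume "replicate d True @ False # w \<in> unary ` S"
  then obtain v where v: "v \<in> S" "replicate d True @ False # w = unary v" by blast
  then obtain x u where xu: "v = x # u" by (cases v) auto
  have "prefix (replicate d True @ False # w) (replicate x True @ False # unary u)"
    "prefix (replicate x True @ False # unary u) (replicate d True @ False # w)"
    using v(2) xu by simp_all
  then have "x = d" "w = unary u"
    by (simp_all add: prefix_replicate_True_False_iff prefix_order.antisym)
  with v(1) xu show "w \<in> unary ` {u. d # u \<in> S}" by blast
qed force

lemma bool_list_cases_ones:
  obtains d where "w = replicate d True"
  | d w' where "w = replicate d True @ False # w'"
proof (induction w arbitrary: thesis)
  case (Cons a w)
  show ?case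
  proof (cases a)
    case True
    show ?thesis
    proof (rule Cons.IH)
      show "w = replicate d True \<Longrightarrow> thesis" for d
        using Cons.prems(1)[of "Suc d"] True by simp
      show "w = replicate d True @ False # w' \<Longrightarrow> thesis" for d w'
        using Cons.prems(2)[of "Suc d" w'] True by simp
    qed
  next
    case False
    then show ?thesis using Cons.prems(2)[of 0 w] by simp
  qed
qed simp

definition block :: "nat \<Rightarrow> nat list set \<Rightarrow> nat list set" where
  "block j E = {xs @ j # ys | xs ys. set xs \<subseteq> {..<j} \<and> ys \<in> E}"

lemma Nil_notin_block [simp]: "[] \<notin> block j E"
  by (auto simp: block_def)

lemma Cons_in_block_iff:
  "x # u \<in> block j E \<longleftrightarrow> (x < j \<and> u \<in> block j E) \<or> (x = j \<and> u \<in> E)"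
proof
  assume "x # u \<in> block j E"
  then obtain xs ys where xu: "x # u = xs @ j # ys" "set xs \<subseteq> {..<j}" "ys \<in> E"
    by (auto simp: block_def)
  then show "(x < j \<and> u \<in> block j E) \<or> (x = j \<and> u \<in> E)"
    by (cases xs) (auto simp: block_def)
next
  assume "(x < j \<and> u \<in> block j E) \<or> (x = j \<and> u \<in> E)"
  then show "x # u \<in> block j E"
  proof
    assume "x < j \<and> u \<in> block j E"
    then obtain xs ys where "u = xs @ j # ys" "set xs \<subseteq> {..<j}" "ys \<in> E" "x < j"
      by (auto simp: block_def)
    then show ?thesis unfolding block_def
      by (intro CollectI exI[of _ "x # xs"] exI[of _ ys]) simp
  next
    assume "x = j \<and> u \<in> E"
    then show ?thesis unfolding block_def
      by (intro CollectI exI[of _ "[]"] exI[of _ u]) simp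
  qed
qed

lemma prefix_first_occurrence:
  assumes "j \<notin> set xs" "j \<notin> set xs'" "prefix (xs @ j # ys) (xs' @ j # ys')"
  shows "xs = xs' \<and> prefix ys ys'"
  using assms
proof (induction xs arbitrary: xs')
  case Nil
  then show ?case by (cases xs') auto
next
  case (Cons x xs)
  then show ?case by (cases xs') auto
qed

lemma no_infinite_prefix_chain_block:
  assumes E: "no_infinite_prefix_chain E"
  shows "no_infinite_prefix_chain (block j E)"
proof (rule no_infinite_prefix_chainI)
  fix v assume mem: "\<forall>i. v i \<in> block j E" and chain: "\<forall>i. strict_prefix (v i) (v (Suc i))"
  obtain xs ys where v0: "v 0 = xs @ j # ys" "set xs \<subseteq> {..<j}"
    using mem[rule_format, of 0] by (auto simp: block_def)
  have "\<exists>u. v i = xs @ j # u \<and> u \<in> E" for i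
  proof -
    obtain xs' u where vi: "v i = xs' @ j # u" "set xs' \<subseteq> {..<j}" "u \<in> E"
      using mem[rule_format, of i] by (auto simp: block_def)
    have "prefix (v 0) (v i)"
      using chain prefix_order.lift_Suc_mono_le[of v 0 i] by (auto simp: strict_prefix_def)
    then have "xs = xs'"
      using prefix_first_occurrence[of j xs xs' ys u] v0 vi by auto
    with vi show ?thesis by blast
  qed
  then obtain u where u: "\<And>i. v i = xs @ j # u i" "\<And>i. u i \<in> E" by metis
  have "strict_prefix (u i) (u (Suc i))" for i
    using chain[rule_format, of i] u(1)[of i] u(1)[of "Suc i"] by (simp add: strict_prefix_def)
  with E u(2) show False by (rule no_infinite_prefix_chainD)
qed

fun ruler_words :: "nat \<Rightarrow> nat list set" where
  "ruler_words 0 = {[]}"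
| "ruler_words (Suc n) = ruler_words n \<union> block n (ruler_words n)"

lemma set_ruler_words: "v \<in> ruler_words n \<Longrightarrow> set v \<subseteq> {..<n}"
  by (induction n arbitrary: v) (fastforce simp: block_def)+

lemma no_infinite_prefix_chain_ruler_words: "no_infinite_prefix_chain (ruler_words n)"
proof (induction n)
  case 0
  show ?case
  proof (rule no_infinite_prefix_chainI)
    fix v assume "\<forall>i. v i \<in> ruler_words 0" "\<forall>i. strict_prefix (v i) (v (Suc i))"
    then have "v 0 = []" "v 1 = []" "strict_prefix (v 0) (v 1)" by auto
    then show False by simp
  qed
next
  case (Suc n)
  show ?case
  proof (rule no_infinite_prefix_chainI)
    fix v assume mem: "\<forall>i. v i \<in> ruler_words (Suc n)"
      and chain: "\<forall>i. strict_prefix (v i) (v (Suc i))"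
    show False
    proof (cases "\<forall>i. v i \<in> ruler_words n")
      case True
      with Suc.IH chain show False by (blast intro: no_infinite_prefix_chainD)
    next
      case False
      then obtain k where "v k \<notin> ruler_words n" by blast
      with mem have "n \<in> set (v k)" by (auto simp: block_def)
      have "v (k + i) \<in> block n (ruler_words n)" for i
      proof -
        have "prefix (v k) (v (k + i))"
          using chain prefix_order.lift_Suc_mono_le[of v k "k + i"]
          by (auto simp: strict_prefix_def)
        with \<open>n \<in> set (v k)\<close> have "v (k + i) \<notin> ruler_words n"
          using set_ruler_words by (blast dest: set_mono_prefix)
        with mem show ?thesis by auto
      qed
      moreover have "strict_prefix (v (k + i)) (v (k + Suc i))" for i
        using chain by simp
      ultimately show False
        using no_infinite_prefix_chain_block[OF Suc.IH]
        by (rule no_infinite_prefix_chainD[rotated])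
    qed
  qed
qed

definition ends_zero :: "nat list \<Rightarrow> bool" where
  "ends_zero v \<longleftrightarrow> v \<noteq> [] \<and> last v = 0"

lemma ends_zero_Nil [simp]: "\<not> ends_zero []"
  by (simp add: ends_zero_def)

lemma ends_zero_append_Cons:
  "ends_zero (xs @ j # ys) \<longleftrightarrow> (if ys = [] then j = 0 else ends_zero ys)"
  by (simp add: ends_zero_def)

definition parity_words :: "nat \<Rightarrow> bool \<Rightarrow> nat list set" where
  "parity_words m b = {v \<in> ruler_words m. ends_zero v = b}"

lemma parity_words_0: "parity_words 0 b = (if b then {} else {[]})"
  by (auto simp: parity_words_def)

lemma parity_words_Suc:
  "parity_words (Suc m) b = parity_words m b
     \<union> block m (if m = 0 then (if b then {[]} else {}) else parity_words m b)"
proof (cases "m = 0")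
  case True
  then show ?thesis by (auto simp: parity_words_def block_def ends_zero_def)
next
  case False
  then have "ends_zero (xs @ m # ys) = ends_zero ys" for xs ys
    by (simp add: ends_zero_append_Cons)
  with False show ?thesis by (auto simp: parity_words_def block_def)
qed

fun ruler :: "nat \<Rightarrow> nat list" where
  "ruler 0 = []"
| "ruler (Suc n) = ruler n @ n # ruler n"

lemma length_ruler: "length (ruler n) = 2 ^ n - 1"
proof (induction n)
  case (Suc n)
  have "1 \<le> (2::nat) ^ n" by simp
  with Suc show ?case by simp
qed simp

lemma set_ruler: "set (ruler n) \<subseteq> {..<n}"
  by (induction n) auto

lemma prefix_ruler_Suc:
  "prefix u (ruler (Suc n)) \<longleftrightarrow>
     prefix u (ruler n) \<or> (\<exists>u'. u = ruler n @ n # u' \<and> prefix u' (ruler n))"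
  by (auto simp: prefix_append prefix_Cons)

lemma prefix_ruler_in_ruler_words: "prefix u (ruler n) \<Longrightarrow> u \<in> ruler_words n"
proof (induction n arbitrary: u)
  case (Suc n)
  from Suc.prems consider "prefix u (ruler n)"
    | u' where "u = ruler n @ n # u'" "prefix u' (ruler n)"
    unfolding prefix_ruler_Suc by blast
  then show ?case
  proof cases
    case 1
    then show ?thesis by (simp add: Suc.IH)
  next
    case 2
    then have "u \<in> block n (ruler_words n)"
      using set_ruler[of n] Suc.IH[of u'] unfolding block_def by blast
    then show ?thesis by simp
  qed
qed simp

lemma prefix_ruler_ends_zero_iff: "prefix u (ruler n) \<Longrightarrow> ends_zero u \<longleftrightarrow> odd (length u)"
proof (induction n arbitrary: u)
  case (Suc n)
  from Suc.prems consider "prefix u (ruler n)"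
    | u' where "u = ruler n @ n # u'" "prefix u' (ruler n)"
    unfolding prefix_ruler_Suc by blast
  then show ?case
  proof cases
    case 1
    with Suc.IH show ?thesis .
  next
    case 2
    show ?thesis
    proof (cases "n = 0")
      case True
      with 2 show ?thesis by (simp add: ends_zero_def)
    next
      case False
      have "length u = 2 ^ n + length u'"
        using 2(1) by (simp add: length_ruler)
      moreover have "even ((2::nat) ^ n)" using False by simp
      ultimately have "odd (length u) \<longleftrightarrow> odd (length u')" by simp
      moreover have "ends_zero u \<longleftrightarrow> ends_zero u'"
        using 2(1) False by (cases "u' = []") (simp_all add: ends_zero_append_Cons)
      ultimately show ?thesis using Suc.IH[OF 2(2)] by simp
    qed
  qed
qed simp

text \<open>The automaton reads a word of \<open>W\<^sub>n\<close> block by block. In state \<open>block_state n j c\<close> it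
  is inside a block \<open>u j\<close> (\<open>u\<close> over the letters below \<open>j\<close>) and has read \<open>c\<close> ones of the
  current letter. After the letter \<open>j\<close> it either continues with a block of a smaller letter or
  stops in state \<open>0\<close>; after the block \<open>0\<close> it stops in state \<open>1\<close>.\<close>

definition block_state :: "nat \<Rightarrow> nat \<Rightarrow> nat \<Rightarrow> nat" where
  "block_state n j c = 2 + j * n + c"

lemma block_state_eq_iff:
  assumes "c < n" "c' < n"
  shows "block_state n j c = block_state n j' c' \<longleftrightarrow> j = j' \<and> c = c'"
proof
  assume "block_state n j c = block_state n j' c'"
  then have eq: "j * n + c = j' * n + c'" by (simp add: block_state_def)
  have "j = (j * n + c) div n" "j' = (j' * n + c') div n" using assms by simp_all
  with eq have "j = j'" by simp
  with eq show "j = j' \<and> c = c'" by simp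
qed simp

lemma block_state_ge_2: "2 \<le> block_state n j c"
  by (simp add: block_state_def)

lemma block_state_less: "j < n \<Longrightarrow> c < n \<Longrightarrow> block_state n j c < 2 + n * n"
proof -
  assume "j < n" "c < n"
  then have "j * n + c < (j + 1) * n" by simp
  also have "\<dots> \<le> n * n" using \<open>j < n\<close> by (intro mult_le_mono1) simp
  finally show ?thesis by (simp add: block_state_def)
qed

definition block_entries :: "nat \<Rightarrow> nat \<Rightarrow> nat set" where
  "block_entries n m = insert 0 {block_state n j 0 | j. j < m}"

definition block_exits :: "nat \<Rightarrow> nat \<Rightarrow> nat set" where
  "block_exits n j = (if j = 0 then {1} else block_entries n j)"

definition ruler_trans :: "nat \<Rightarrow> (nat \<times> bool \<times> nat) set" where
  "ruler_trans n =
     {(block_state n j c, True, block_state n j (Suc c)) | j c. j < n \<and> c < j}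
   \<union> {(block_state n j c, False, block_state n j 0) | j c. j < n \<and> c < j}
   \<union> {(block_state n j j, False, p) | j p. j < n \<and> p \<in> block_exits n j}"

definition ruler_nfa :: "nat \<Rightarrow> bool \<Rightarrow> nfa" where
  "ruler_nfa n b = \<lparr>states = {..<2 + n * n}, init = block_entries n n, fin = {of_bool b},
     trans = ruler_trans n\<rparr>"

lemma ruler_nfa_simps [simp]:
  "states (ruler_nfa n b) = {..<2 + n * n}" "init (ruler_nfa n b) = block_entries n n"
  "fin (ruler_nfa n b) = {of_bool b}" "trans (ruler_nfa n b) = ruler_trans n"
  by (simp_all add: ruler_nfa_def)

lemma ruler_trans_from_block_state:
  assumes j: "j < n" and c: "c \<le> j"
  shows "(block_state n j c, a, p) \<in> ruler_trans n \<longleftrightarrow>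
           (a \<and> c < j \<and> p = block_state n j (Suc c))
         \<or> (\<not> a \<and> c < j \<and> p = block_state n j 0)
         \<or> (\<not> a \<and> c = j \<and> p \<in> block_exits n j)"
    (is "_ \<longleftrightarrow> ?step")
proof
  have same: "j' = j \<and> c' = c" if "block_state n j c = block_state n j' c'" "c' \<le> j'" "j' < n"
    for j' c'
    using that j c block_state_eq_iff[of c n c' j j'] by simp
  assume "(block_state n j c, a, p) \<in> ruler_trans n"
  then consider
      (ones) j' c' where "block_state n j c = block_state n j' c'" "a"
        "p = block_state n j' (Suc c')" "j' < n" "c' < j'"
    | (zero) j' c' where "block_state n j c = block_state n j' c'" "\<not> a"
        "p = block_state n j' 0" "j' < n" "c' < j'"
    | (exit) j' where "block_state n j c = block_state n j' j'" "\<not> a"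
        "p \<in> block_exits n j'" "j' < n"
    unfolding ruler_trans_def by blast
  then show ?step
  proof cases
    case ones
    with same[of j' c'] show ?thesis by simp
  next
    case zero
    with same[of j' c'] show ?thesis by simp
  next
    case exit
    with same[of j' j'] show ?thesis by simp
  qed
next
  assume ?step
  with j show "(block_state n j c, a, p) \<in> ruler_trans n"
    unfolding ruler_trans_def by blast
qed

lemma ruler_trans_source: "(q, a, p) \<in> ruler_trans n \<Longrightarrow> 2 \<le> q"
  unfolding ruler_trans_def using block_state_ge_2 by auto

lemma ruler_trans_subset: "ruler_trans n \<subseteq> {..<2 + n * n} \<times> UNIV \<times> {..<2 + n * n}"
proof -
  have "block_state n j c \<in> {..<2 + n * n}" if "j < n" "c \<le> j" for j c
    using that block_state_less by simp
  moreover have "block_exits n j \<subseteq> {..<2 + n * n}" if "j < n" for j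
    using that block_state_less by (auto simp: block_exits_def block_entries_def)
  ultimately show ?thesis
    unfolding ruler_trans_def by fastforce
qed

lemma wf_ruler_nfa: "wf_nfa (ruler_nfa n b)"
  using ruler_trans_subset block_state_less
  by (auto simp: wf_nfa_def block_entries_def)

lemma acc_ruler_nfa_terminal:
  "q \<le> 1 \<Longrightarrow> acc (ruler_nfa n b) q w \<longleftrightarrow> w = [] \<and> q = of_bool b"
  by (cases w) (auto simp: acc_Cons dest: ruler_trans_source)

lemma acc_ruler_nfa_block_state_Nil: "\<not> acc (ruler_nfa n b) (block_state n j c) []"
  using block_state_ge_2[of n j c] by auto

lemma acc_ruler_nfa_True:
  "j < n \<Longrightarrow> c \<le> j \<Longrightarrow> acc (ruler_nfa n b) (block_state n j c) (True # w) \<longleftrightarrow>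
     c < j \<and> acc (ruler_nfa n b) (block_state n j (Suc c)) w"
  by (auto simp: acc_Cons ruler_trans_from_block_state)

lemma acc_ruler_nfa_False:
  "j < n \<Longrightarrow> c \<le> j \<Longrightarrow> acc (ruler_nfa n b) (block_state n j c) (False # w) \<longleftrightarrow>
     (c < j \<and> acc (ruler_nfa n b) (block_state n j 0) w)
   \<or> (c = j \<and> (\<exists>q\<in>block_exits n j. acc (ruler_nfa n b) q w))"
  by (auto simp: acc_Cons ruler_trans_from_block_state)

lemma acc_ruler_nfa_replicate_True:
  "j < n \<Longrightarrow> c \<le> j \<Longrightarrow> acc (ruler_nfa n b) (block_state n j c) (replicate d True @ w) \<longleftrightarrow>
     c + d \<le> j \<and> acc (ruler_nfa n b) (block_state n j (c + d)) w"
proof (induction d arbitrary: c)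
  case (Suc d)
  then show ?case by (auto simp: acc_ruler_nfa_True)
qed simp

lemma acc_ruler_nfa_block:
  assumes j: "j < n"
    and exits: "\<And>w. (\<exists>q\<in>block_exits n j. acc (ruler_nfa n b) q w) \<longleftrightarrow> w \<in> unary ` E"
  shows "acc (ruler_nfa n b) (block_state n j 0) w \<longleftrightarrow> w \<in> unary ` block j E"
proof (induction w rule: length_induct)
  case (1 w)
  consider d where "w = replicate d True" | d w' where "w = replicate d True @ False # w'"
    by (rule bool_list_cases_ones)
  then show ?case
  proof cases
    case 1
    then show ?thesis
      using acc_ruler_nfa_replicate_True[OF j, of 0 b d "[]"] acc_ruler_nfa_block_state_Nil
      by (simp add: replicate_True_in_unary_image)
  next
    case 2
    then have IH: "acc (ruler_nfa n b) (block_state n j 0) w' \<longleftrightarrow> w' \<in> unary ` block j E"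
      using "1.IH" by simp
    have "acc (ruler_nfa n b) (block_state n j 0) w
          \<longleftrightarrow> d \<le> j \<and> acc (ruler_nfa n b) (block_state n j d) (False # w')"
      using 2 acc_ruler_nfa_replicate_True[OF j] by simp
    also have "\<dots> \<longleftrightarrow> (d < j \<and> acc (ruler_nfa n b) (block_state n j 0) w')
                    \<or> (d = j \<and> (\<exists>q\<in>block_exits n j. acc (ruler_nfa n b) q w'))"
      using acc_ruler_nfa_False[OF j] by auto
    also have "\<dots> \<longleftrightarrow> (d < j \<and> w' \<in> unary ` block j E) \<or> (d = j \<and> w' \<in> unary ` E)"
      by (simp add: IH exits)
    also have "\<dots> \<longleftrightarrow> w' \<in> unary ` {u. d # u \<in> block j E}"
      by (auto simp: Cons_in_block_iff)
    also have "\<dots> \<longleftrightarrow> w \<in> unary ` block j E"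
      using 2 by (simp add: replicate_True_False_in_unary_image)
    finally show ?thesis .
  qed
qed

lemma acc_ruler_nfa_block_entries:
  "m \<le> n \<Longrightarrow> (\<exists>q\<in>block_entries n m. acc (ruler_nfa n b) q w) \<longleftrightarrow> w \<in> unary ` parity_words m b"
proof (induction m arbitrary: w)
  case 0
  then show ?case by (auto simp: block_entries_def acc_ruler_nfa_terminal parity_words_0)
next
  case (Suc m)
  define E where "E = (if m = 0 then (if b then {[]} else {}) else parity_words m b)"
  have "(\<exists>q\<in>block_exits n m. acc (ruler_nfa n b) q w) \<longleftrightarrow> w \<in> unary ` E" for w
    using Suc by (auto simp: E_def block_exits_def acc_ruler_nfa_terminal)
  then have "acc (ruler_nfa n b) (block_state n m 0) w \<longleftrightarrow> w \<in> unary ` block m E"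
    using Suc.prems by (intro acc_ruler_nfa_block) simp_all
  moreover have "block_entries n (Suc m) = insert (block_state n m 0) (block_entries n m)"
    by (auto simp: block_entries_def less_Suc_eq)
  ultimately show ?case
    using Suc by (auto simp: parity_words_Suc E_def[symmetric])
qed

lemma lang_ruler_nfa: "lang (ruler_nfa n b) = unary ` parity_words n b"
  using acc_ruler_nfa_block_entries[of n n b] by (auto simp: lang_iff_acc)

lemma ruler_langs_disjoint: "lang (ruler_nfa n False) \<inter> lang (ruler_nfa n True) = {}"
  using inj_unary by (auto simp: lang_ruler_nfa parity_words_def dest: injD)

lemma ruler_langs_no_infinite_tower:
  "\<not> (\<exists>w. infinite_tower (lang (ruler_nfa n False)) (lang (ruler_nfa n True)) w)"
proof (rule no_infinite_tower_if_disjoint[OF ruler_langs_disjoint])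
  have "no_infinite_prefix_chain (unary ` ruler_words n)"
    by (rule no_infinite_prefix_chain_image) (simp_all add: no_infinite_prefix_chain_ruler_words)
  then show "no_infinite_prefix_chain (lang (ruler_nfa n False) \<union> lang (ruler_nfa n True))"
    by (rule no_infinite_prefix_chain_subset) (auto simp: lang_ruler_nfa parity_words_def)
qed

lemma ruler_langs_tower:
  "tower (lang (ruler_nfa n False)) (lang (ruler_nfa n True))
     (map (\<lambda>i. unary (take i (ruler n))) [0..<2 ^ n])"
proof (rule tower_if_alternating[OF _ ruler_langs_disjoint])
  fix i assume "i < length (map (\<lambda>i. unary (take i (ruler n))) [0..<2 ^ n])"
  then have "length (take i (ruler n)) = i" by (simp add: length_ruler)
  then have "take i (ruler n) \<in> parity_words n (odd i)"
    using prefix_ruler_in_ruler_words[OF take_is_prefix]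
      prefix_ruler_ends_zero_iff[OF take_is_prefix, of i n]
    by (simp add: parity_words_def)
  with \<open>i < _\<close> show "map (\<lambda>i. unary (take i (ruler n))) [0..<2 ^ n] ! i
      \<in> (if even i then lang (ruler_nfa n False) else lang (ruler_nfa n True))"
    by (auto simp: lang_ruler_nfa)
next
  fix i assume "Suc i < length (map (\<lambda>i. unary (take i (ruler n))) [0..<2 ^ n])"
  moreover have "prefix (take i (ruler n)) (take (Suc i) (ruler n))"
    by (metis le_SucI min.absorb1 order_refl take_is_prefix take_take)
  ultimately show "prefix (map (\<lambda>i. unary (take i (ruler n))) [0..<2 ^ n] ! i)
      (map (\<lambda>i. unary (take i (ruler n))) [0..<2 ^ n] ! Suc i)"
    by simp
qed simp

lemma ruler_nfas:
  "\<exists>A B. wf_nfa A \<and> wf_nfa B \<and> card (states A) = 2 + n * n \<and> card (states B) = 2 + n * n \<and>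
     \<not> (\<exists>w. infinite_tower (lang A) (lang B) w) \<and>
     (\<exists>ws. tower (lang A) (lang B) ws \<and> length ws = 2 ^ n)"
proof (intro exI conjI)
  show "tower (lang (ruler_nfa n False)) (lang (ruler_nfa n True))
      (map (\<lambda>i. unary (take i (ruler n))) [0..<2 ^ n])"
    by (rule ruler_langs_tower)
qed (simp_all add: wf_ruler_nfa ruler_langs_no_infinite_tower)

lemma two_pow_exceeds_poly: "\<exists>n::nat. c * (2 * (2 + n * n)) ^ k < 2 ^ n"
proof -
  have "(\<lambda>n::nat. real c * (2 * (2 + real n * real n)) ^ k / 2 ^ n) \<longlonglongrightarrow> 0"
    by real_asymp
  then have "\<forall>\<^sub>F n in sequentially. real c * (2 * (2 + real n * real n)) ^ k / 2 ^ n < 1"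
    by (rule order_tendstoD) simp
  then obtain n where "real c * (2 * (2 + real n * real n)) ^ k / 2 ^ n < 1"
    by (auto simp: eventually_sequentially)
  then have "real (c * (2 * (2 + n * n)) ^ k) < real (2 ^ n)"
    by (simp add: divide_less_eq)
  then show ?thesis
    by (intro exI) (simp only: of_nat_less_iff)
qed

theorem corollary17:
  "\<exists>P :: (nat \<times> nat) set. \<exists>h :: nat \<times> nat \<Rightarrow> nat.
     infinite P \<and>
     (\<forall>(n1, n2) \<in> P. 0 < n1 \<and> 0 < n2 \<and>
        (\<exists>A B. wf_nfa A \<and> wf_nfa B \<and> card (states A) = n1 \<and> card (states B) = n2 \<and>
           \<not> (\<exists>w. infinite_tower (lang A) (lang B) w) \<and>
           (\<exists>ws. tower (lang A) (lang B) ws \<and> length ws = h (n1, n2)))) \<and>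
     (\<forall>(c::nat) (k::nat). \<exists>(n1, n2) \<in> P. h (n1, n2) > c * (n1 + n2) ^ k)"
proof -
  define g :: "nat \<Rightarrow> nat" where "g n = 2 + n * n" for n
  have "inj g"
    by (rule strict_mono_imp_inj_on) (simp add: g_def strict_mono_Suc_iff)
  define h :: "nat \<times> nat \<Rightarrow> nat" where "h p = 2 ^ inv g (fst p)" for p
  have h: "h (g n, g n) = 2 ^ n" for n
    using \<open>inj g\<close> by (simp add: h_def)
  have "inj (\<lambda>n. (g n, g n))"
    using \<open>inj g\<close> by (simp add: inj_on_def)
  then have "infinite (range (\<lambda>n. (g n, g n)))"
    using finite_imageD infinite_UNIV_nat by auto
  moreover have "0 < g n" for n
    by (simp add: g_def)
  moreover have "\<exists>A B. wf_nfa A \<and> wf_nfa B \<and> card (states A) = g n \<and> card (states B) = g n \<and>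
      \<not> (\<exists>w. infinite_tower (lang A) (lang B) w) \<and>
      (\<exists>ws. tower (lang A) (lang B) ws \<and> length ws = h (g n, g n))" for n
    using ruler_nfas[of n] unfolding h g_def[symmetric] .
  moreover have "\<exists>n. h (g n, g n) > c * (g n + g n) ^ k" for c k
  proof -
    obtain n where "c * (2 * (2 + n * n)) ^ k < 2 ^ n"
      using two_pow_exceeds_poly by blast
    moreover have "g n + g n = 2 * (2 + n * n)" by (simp add: g_def)
    ultimately show ?thesis by (metis h)
  qed
  ultimately show ?thesis
    by (intro exI[of _ "range (\<lambda>n. (g n, g n))"] exI[of _ h] conjI) auto
qed

end
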